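(* Let $k\geq 2$ be an integer and consider an instance of the cake-cutting problem with $k$ players (with hungry and closed preferences, as described in the context). Then there exists a division of the cake into $k-1$ (connected) pieces such that, no matter which one player leaves, there is an envy-free assignment of the $k-1$ pieces to the remaining $k-1$ players, i.e., a bijection between the pieces and the remaining players such that each remaining player is assigned a piece that is among her preferred pieces in this division.
   Context: The cake is the segment $[0,1]$. A division of the cake into $n$ pieces is a partition of $[0,1]$ into $n$ intervals (pieces, numbered from left to right, possibly of length zero); whether endpoints belong to an interval does not matter, so a division into $n$ pieces is identified with the vector $(y_1,\ldots,y_n)$ of piece lengths, a point of the standard simplex $\{y\in\mathbb{R}_{\ge0}^n:\sum_j y_j=1\}$. For each division, each player has a nonempty set of preferred pieces (she may prefer several). Hungry assumption: in any division, each player prefers at least one piece of positive length. Closed preferences assumption: if a player prefers the $j$-th piece in each division of a converging sequence of divisions (into the same number of pieces), she also prefers the $j$-th piece in the limit division. An assignment of pieces to players is envy-free if each player is assigned a piece that she prefers (weakly) to all other pieces of the division, i.e., one of her preferred pieces. *)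

theory Defs
  imports "HOL-Analysis.Analysis"
begin

text \<open>A division of [0,1] into n pieces, identified with the vector of piece lengths
  (y 0, ..., y (n-1)); canonically represented as a function nat => real vanishing
  outside {..<n}.\<close>
definition division :: "nat \<Rightarrow> (nat \<Rightarrow> real) set" where
  "division n = {y. (\<forall>j<n. 0 \<le> y j) \<and> (\<forall>j\<ge>n. y j = 0) \<and> (\<Sum>j<n. y j) = 1}"

text \<open>pref i n y = set of pieces (indices in {..<n}) that player i prefers in the division y
  into n pieces.  A cake-cutting instance with k players (players 0..k-1).\<close>
definition preferences_wf :: "nat \<Rightarrow> (nat \<Rightarrow> nat \<Rightarrow> (nat \<Rightarrow> real) \<Rightarrow> nat set) \<Rightarrow> bool" where
  "preferences_wf k pref \<longleftrightarrow>
     (\<forall>i<k. \<forall>n. \<forall>y\<in>division n. pref i n y \<noteq> {} \<and> pref i n y \<subseteq> {..<n})"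

definition hungry :: "nat \<Rightarrow> (nat \<Rightarrow> nat \<Rightarrow> (nat \<Rightarrow> real) \<Rightarrow> nat set) \<Rightarrow> bool" where
  "hungry k pref \<longleftrightarrow> (\<forall>i<k. \<forall>n. \<forall>y\<in>division n. \<exists>j\<in>pref i n y. y j > 0)"

definition closed_preferences :: "nat \<Rightarrow> (nat \<Rightarrow> nat \<Rightarrow> (nat \<Rightarrow> real) \<Rightarrow> nat set) \<Rightarrow> bool" where
  "closed_preferences k pref \<longleftrightarrow>
     (\<forall>i<k. \<forall>n. \<forall>d :: nat \<Rightarrow> nat \<Rightarrow> real. \<forall>y j.
        (\<forall>m. d m \<in> division n) \<longrightarrow> y \<in> division n \<longrightarrow>
        (\<forall>t. (\<lambda>m. d m t) \<longlonglongrightarrow> y t) \<longrightarrow>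
        (\<forall>m. j \<in> pref i n (d m)) \<longrightarrow> j \<in> pref i n y)"

end

(* For a tolerance e > 0, each of the k = n + 1 players spreads a unit of weight over the
   pieces she prefers in some division that is e-close to the current one.  A Brouwer fixed
   point (obtained from Kuhn's combinatorial lemma) yields a division at which every piece
   receives the same total weight (n + 1) / n; counting weights then shows that any s <= n
   players almost prefer at least s pieces together.  Letting e tend to 0 along a convergent
   subsequence, closedness of preferences turns this into Hall's condition for the exact
   preferences at the limit division, and Hall's marriage theorem provides, for whichever
   player leaves, a perfect matching of the remaining n players with the n pieces. *)

theory Submission
  imports Defs
begin

section \<open>Brouwer's fixed point theorem on the cube and the simplex\<close>

definition unit_cube :: "nat \<Rightarrow> (nat \<Rightarrow> real) set" where
  "unit_cube n = {x. (\<forall>i<n. 0 \<le> x i \<and> x i \<le> 1) \<and> (\<forall>i\<ge>n. x i = 0)}"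

definition seq_continuous_on :: "nat \<Rightarrow> (nat \<Rightarrow> real) set \<Rightarrow> ((nat \<Rightarrow> real) \<Rightarrow> nat \<Rightarrow> real) \<Rightarrow> bool" where
  "seq_continuous_on n D f \<longleftrightarrow>
     (\<forall>X x. (\<forall>m. X m \<in> D) \<longrightarrow> x \<in> D \<longrightarrow> (\<forall>i. (\<lambda>m. X m i) \<longlonglongrightarrow> x i) \<longrightarrow>
        (\<forall>i<n. (\<lambda>m. f (X m) i) \<longlonglongrightarrow> f x i))"

lemma seq_continuous_onD:
  assumes "seq_continuous_on n D f" "\<And>m. X m \<in> D" "x \<in> D" "\<And>i. (\<lambda>m. X m i) \<longlonglongrightarrow> x i" "i < n"
  shows "(\<lambda>m. f (X m) i) \<longlonglongrightarrow> f x i"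
  using assms unfolding seq_continuous_on_def by blast

lemma LIMSEQ_close_to:
  fixes X Y :: "nat \<Rightarrow> real"
  assumes "X \<longlonglongrightarrow> l" and "e \<longlonglongrightarrow> 0" and "\<And>m. \<bar>Y m - X m\<bar> \<le> e m"
  shows "Y \<longlonglongrightarrow> l"
proof -
  have "(\<lambda>m. Y m - X m) \<longlonglongrightarrow> 0"
    by (rule Lim_null_comparison[OF _ assms(2)]) (use assms(3) in \<open>auto intro: always_eventually\<close>)
  from tendsto_add[OF this assms(1)] show ?thesis by simp
qed

lemma coordinatewise_convergent_subseq:
  fixes X :: "nat \<Rightarrow> nat \<Rightarrow> real"
  assumes K: "compact K" and X: "\<And>m i. i < n \<Longrightarrow> X m i \<in> K"
  obtains r L where "strict_mono r" "\<And>i. i < n \<Longrightarrow> L i \<in> K" "\<And>i. i < n \<Longrightarrow> (\<lambda>m. X (r m) i) \<longlonglongrightarrow> L i"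
proof -
  have "\<exists>r L. strict_mono r \<and> (\<forall>i<n. L i \<in> K \<and> (\<lambda>m. X (r m) i) \<longlonglongrightarrow> L i)"
    using X
  proof (induction n)
    case 0
    show ?case by (auto intro: strict_monoI)
  next
    case (Suc n)
    then obtain r L where r: "strict_mono r" and L: "\<forall>i<n. L i \<in> K \<and> (\<lambda>m. X (r m) i) \<longlonglongrightarrow> L i"
      by auto
    from compact_imp_seq_compact[OF K] Suc.prems
    obtain l r' where l: "l \<in> K" and r': "strict_mono r'" and lim: "((\<lambda>m. X (r m) n) \<circ> r') \<longlonglongrightarrow> l"
      unfolding seq_compact_def by (metis lessI)
    have "(\<lambda>m. X (r (r' m)) i) \<longlonglongrightarrow> (L(n := l)) i" if "i < Suc n" for i
      using that LIMSEQ_subseq_LIMSEQ[OF _ r', of "\<lambda>m. X (r m) i"] L lim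
      by (cases "i = n") (auto simp: comp_def)
    moreover have "strict_mono (r \<circ> r')" using r r' by (rule strict_mono_o)
    ultimately show ?case using L l
      by (intro exI[of _ "r \<circ> r'"] exI[of _ "L(n := l)"]) (auto simp: less_Suc_eq comp_def)
  qed
  then show thesis using that by blast
qed

definition grid_point :: "nat \<Rightarrow> nat \<Rightarrow> (nat \<Rightarrow> nat) \<Rightarrow> nat \<Rightarrow> real" where
  "grid_point n p x = (\<lambda>i. if i < n then real (x i) / real p else 0)"

definition grid_cell :: "nat \<Rightarrow> (nat \<Rightarrow> nat) \<Rightarrow> (nat \<Rightarrow> nat) set" where
  "grid_cell n q = {a. \<forall>j<n. q j \<le> a j \<and> a j \<le> q j + 1}"

lemma grid_point_in_unit_cube:
  "0 < p \<Longrightarrow> (\<And>i. i < n \<Longrightarrow> x i \<le> p) \<Longrightarrow> grid_point n p x \<in> unit_cube n"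
  by (auto simp: unit_cube_def grid_point_def)

lemma grid_cell_bounded: "a \<in> grid_cell n q \<Longrightarrow> \<forall>i<n. q i < p \<Longrightarrow> i < n \<Longrightarrow> a i \<le> p"
  by (fastforce simp: grid_cell_def)

lemma grid_point_cell_dist:
  assumes "a \<in> grid_cell n q" "0 < p"
  shows "\<bar>grid_point n p a j - grid_point n p q j\<bar> \<le> 1 / real p"
proof (cases "j < n")
  case True
  then have "real (a j) - real (q j) \<in> {0..1}" using assms(1) by (auto simp: grid_cell_def)
  then show ?thesis
    using True assms(2) by (auto simp: grid_point_def diff_divide_distrib[symmetric] divide_le_cancel)
qed (simp add: grid_point_def)

text \<open>Kuhn's combinatorial lemma, applied to the labelling that records in which direction
  \<open>f\<close> moves each coordinate of a grid point, yields a small cell on which every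
  coordinate is moved both ways.\<close>

lemma kuhn_approximate_fixpoint:
  assumes maps: "\<And>x. x \<in> unit_cube n \<Longrightarrow> f x \<in> unit_cube n" and p: "0 < p"
  obtains q where "\<forall>i<n. q i < p"
    and "\<forall>i<n. \<exists>a\<in>grid_cell n q. \<exists>b\<in>grid_cell n q.
           grid_point n p a i \<le> f (grid_point n p a) i \<and> f (grid_point n p b) i \<le> grid_point n p b i"
proof -
  define label where "label x i = (if x i = 0 then 0 else if x i = p then 1
      else if grid_point n p x i \<le> f (grid_point n p x) i then 0 else (1::nat))" for x i
  have label_01: "label x i = 0 \<or> label x i = 1" for x i by (auto simp: label_def)
  have fx: "f (grid_point n p x) \<in> unit_cube n" if "\<forall>i<n. x i \<le> p" for x
    using maps grid_point_in_unit_cube p that by blast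
  have label_0: "grid_point n p x i \<le> f (grid_point n p x) i"
    if "label x i = 0" "\<forall>i<n. x i \<le> p" "i < n" for x i
    using that fx[OF that(2)] p by (auto simp: label_def unit_cube_def grid_point_def split: if_splits)
  have label_1: "f (grid_point n p x) i \<le> grid_point n p x i"
    if "label x i = 1" "\<forall>i<n. x i \<le> p" "i < n" for x i
    using that fx[OF that(2)] p by (auto simp: label_def unit_cube_def grid_point_def split: if_splits)
  obtain q where q: "\<forall>i<n. q i < p"
    and cell: "\<forall>i<n. \<exists>r s. (\<forall>j<n. q j \<le> r j \<and> r j \<le> q j + 1) \<and> (\<forall>j<n. q j \<le> s j \<and> s j \<le> q j + 1)
                       \<and> label r i \<noteq> label s i"
    using kuhn_lemma[of p n label] p label_01 by (auto simp: label_def)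
  have "\<exists>a\<in>grid_cell n q. \<exists>b\<in>grid_cell n q.
          grid_point n p a i \<le> f (grid_point n p a) i \<and> f (grid_point n p b) i \<le> grid_point n p b i"
    if i: "i < n" for i
  proof -
    obtain r s where rs: "r \<in> grid_cell n q" "s \<in> grid_cell n q" and d: "label r i \<noteq> label s i"
      using cell i unfolding grid_cell_def by blast
    have "\<forall>j<n. r j \<le> p" "\<forall>j<n. s j \<le> p" using rs grid_cell_bounded q by blast+
    then show ?thesis
      using d label_01[of r i] label_01[of s i] label_0 label_1 rs i by metis
  qed
  then show thesis using that q by blast
qed


theorem brouwer_unit_cube:
  assumes maps: "\<And>x. x \<in> unit_cube n \<Longrightarrow> f x \<in> unit_cube n" and cont: "seq_continuous_on n (unit_cube n) f"
  obtains x where "x \<in> unit_cube n" "\<And>i. i < n \<Longrightarrow> f x i = x i"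
proof -
  define gp where "gp m = grid_point n (Suc m)" for m
  have "\<exists>q. (\<forall>i<n. q i < Suc m) \<and> (\<forall>i<n. \<exists>a\<in>grid_cell n q. \<exists>b\<in>grid_cell n q.
                  gp m a i \<le> f (gp m a) i \<and> f (gp m b) i \<le> gp m b i)" for m
    unfolding gp_def by (rule kuhn_approximate_fixpoint[of n f "Suc m", OF maps]) blast+
  then obtain Q where Q: "\<And>m. \<forall>i<n. Q m i < Suc m"
    and QAB: "\<And>m. \<forall>i<n. \<exists>a\<in>grid_cell n (Q m). \<exists>b\<in>grid_cell n (Q m).
                  gp m a i \<le> f (gp m a) i \<and> f (gp m b) i \<le> gp m b i"
    by metis
  then obtain A B where AB: "\<And>m i. i < n \<Longrightarrow> A m i \<in> grid_cell n (Q m) \<and> B m i \<in> grid_cell n (Q m)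
      \<and> gp m (A m i) i \<le> f (gp m (A m i)) i \<and> f (gp m (B m i)) i \<le> gp m (B m i) i"
    by metis
  have in_cube: "gp m a \<in> unit_cube n" if "a \<in> grid_cell n (Q m)" for m a
    unfolding gp_def using grid_point_in_unit_cube grid_cell_bounded[OF that Q] by blast
  have "gp m (Q m) i \<in> {0..1}" if "i < n" for m i
    using in_cube[of "Q m" m] that by (auto simp: grid_cell_def unit_cube_def)
  then obtain r L where r: "strict_mono r" and L01: "\<And>i. i < n \<Longrightarrow> L i \<in> {0..1}"
    and L: "\<And>i. i < n \<Longrightarrow> (\<lambda>m. gp (r m) (Q (r m)) i) \<longlonglongrightarrow> L i"
    using coordinatewise_convergent_subseq[of "{0..1}" n "\<lambda>m. gp m (Q m)"] by blast
  define x where "x i = (if i < n then L i else 0)" for i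
  have x: "x \<in> unit_cube n" using L01 by (auto simp: unit_cube_def x_def)
  have mesh: "(\<lambda>m. 1 / real (Suc (r m))) \<longlonglongrightarrow> 0"
    using LIMSEQ_subseq_LIMSEQ[OF LIMSEQ_inverse_real_of_nat r] by (simp add: comp_def inverse_eq_divide)
  have cell_lim: "(\<lambda>m. gp (r m) (C m) j) \<longlonglongrightarrow> x j" if C: "\<And>m. C m \<in> grid_cell n (Q (r m))" for C j
  proof (cases "j < n")
    case True
    show ?thesis
      using LIMSEQ_close_to[OF L[OF True] mesh] grid_point_cell_dist[OF C zero_less_Suc] True
      unfolding gp_def x_def by simp
  qed (simp add: gp_def grid_point_def x_def)
  have "f x i = x i" if i: "i < n" for i
  proof -
    let ?a = "\<lambda>m. gp (r m) (A (r m) i)" and ?b = "\<lambda>m. gp (r m) (B (r m) i)"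
    have a: "(\<lambda>m. ?a m j) \<longlonglongrightarrow> x j" and b: "(\<lambda>m. ?b m j) \<longlonglongrightarrow> x j" for j
      using cell_lim[of "\<lambda>m. A (r m) i"] cell_lim[of "\<lambda>m. B (r m) i"] AB[OF i] by blast+
    have "(\<lambda>m. f (?a m) i) \<longlonglongrightarrow> f x i" "(\<lambda>m. f (?b m) i) \<longlonglongrightarrow> f x i"
      using seq_continuous_onD[OF cont _ x _ i, of ?a] seq_continuous_onD[OF cont _ x _ i, of ?b]
        a b in_cube AB[OF i] by blast+
    then have "x i \<le> f x i" "f x i \<le> x i"
      using LIMSEQ_le[OF a] LIMSEQ_le[OF _ b] AB[OF i] by blast+
    then show ?thesis by simp
  qed
  then show thesis using that x by blast
qed

lemma division_subset_unit_cube: "division n \<subseteq> unit_cube n"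
proof
  fix y assume y: "y \<in> division n"
  have "y i \<le> 1" if "i < n" for i
  proof -
    have "y i \<le> (\<Sum>j<n. y j)" using y that by (intro member_le_sum) (auto simp: division_def)
    then show ?thesis using y by (simp add: division_def)
  qed
  then show "y \<in> unit_cube n" using y by (auto simp: division_def unit_cube_def)
qed

text \<open>The simplex is a retract of the cube: scale a point down into the simplex's lower cone
  and spread the missing mass evenly over all coordinates.\<close>

theorem brouwer_division:
  assumes n: "n \<ge> 1" and maps: "\<And>y. y \<in> division n \<Longrightarrow> T y \<in> division n"
    and cont: "seq_continuous_on n (division n) T"
  obtains y where "y \<in> division n" "\<And>i. i < n \<Longrightarrow> T y i = y i"
proof -
  define z where "z x = (\<lambda>j. x j / max 1 (\<Sum>i<n. x i))" for x :: "nat \<Rightarrow> real"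
  define \<rho> where "\<rho> x = (\<lambda>j. if j < n then z x j + (1 - (\<Sum>i<n. z x i)) / real n else 0)" for x
  have sum_z: "(\<Sum>i<n. z x i) = (\<Sum>i<n. x i) / max 1 (\<Sum>i<n. x i)" for x
    by (simp add: z_def sum_divide_distrib)
  have \<rho>_division: "\<rho> x \<in> division n" if x: "x \<in> unit_cube n" for x
  proof -
    have "0 \<le> (\<Sum>i<n. x i)" using x by (intro sum_nonneg) (auto simp: unit_cube_def)
    then have "(\<Sum>i<n. z x i) \<le> 1" unfolding sum_z by (auto simp: divide_le_eq)
    moreover have "0 \<le> z x j" if "j < n" for j using x that by (auto simp: z_def unit_cube_def)
    moreover have "(\<Sum>j<n. \<rho> x j) = (\<Sum>j<n. z x j) + real n * ((1 - (\<Sum>i<n. z x i)) / real n)"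
      by (simp add: \<rho>_def sum.distrib)
    ultimately show ?thesis using n by (auto simp: division_def \<rho>_def)
  qed
  have \<rho>_id: "\<rho> y = y" if "y \<in> division n" for y
    using that sum_z[of y] by (auto simp: \<rho>_def z_def division_def)
  have "seq_continuous_on n (unit_cube n) (T \<circ> \<rho>)"
    unfolding seq_continuous_on_def
  proof (intro allI impI)
    fix X x i assume X: "\<forall>m. X m \<in> unit_cube n" and x: "x \<in> unit_cube n"
      and lim: "\<forall>i. (\<lambda>m. X m i) \<longlonglongrightarrow> x i" and i: "i < n"
    have "(\<lambda>m. z (X m) j) \<longlonglongrightarrow> z x j" for j
      unfolding z_def by (intro tendsto_intros lim[rule_format]) (auto simp: max_def)
    then have "(\<lambda>m. \<rho> (X m) j) \<longlonglongrightarrow> \<rho> x j" for j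
      unfolding \<rho>_def by (cases "j < n") (auto intro!: tendsto_intros)
    then show "(\<lambda>m. (T \<circ> \<rho>) (X m) i) \<longlonglongrightarrow> (T \<circ> \<rho>) x i"
      unfolding comp_def using seq_continuous_onD[OF cont _ _ _ i, of "\<lambda>m. \<rho> (X m)"] X x \<rho>_division by blast
  qed
  moreover have "(T \<circ> \<rho>) x \<in> unit_cube n" if "x \<in> unit_cube n" for x
    using maps \<rho>_division that division_subset_unit_cube by auto
  ultimately obtain x where x: "x \<in> unit_cube n" and fix_x: "\<And>i. i < n \<Longrightarrow> T (\<rho> x) i = x i"
    using brouwer_unit_cube[of n "T \<circ> \<rho>"] by auto
  have T\<rho>: "T (\<rho> x) \<in> division n" using maps \<rho>_division x by blast
  have "x = T (\<rho> x)"
  proof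
    fix i show "x i = T (\<rho> x) i"
      using fix_x x T\<rho> by (cases "i < n") (auto simp: division_def unit_cube_def)
  qed
  then show thesis using that T\<rho> \<rho>_id by metis
qed

lemma equal_average_if_deficit_proportional:
  fixes g :: "nat \<Rightarrow> real"
  assumes n: "n \<ge> 1" and y: "y \<in> division n"
    and g_sum: "(\<Sum>j<n. g j) = 1" and g_zero: "\<And>j. j < n \<Longrightarrow> y j = 0 \<Longrightarrow> g j = 0"
    and proportional: "\<And>j. j < n \<Longrightarrow> y j * (\<Sum>i<n. max 0 (1 / real n - g i)) = max 0 (1 / real n - g j)"
    and j: "j < n"
  shows "g j = 1 / real n"
proof -
  define s where "s = (\<Sum>i<n. max 0 (1 / real n - g i))"
  have not_below: "1 / real n \<le> g j" if j: "j < n" for j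
  proof (rule ccontr)
    assume "\<not> 1 / real n \<le> g j"
    then have "0 < s"
      unfolding s_def using j by (intro sum_pos2[of _ j]) auto
    have "g i < 1 / real n" if i: "i < n" for i
    proof (cases "y i = 0")
      case True
      then show ?thesis using g_zero[OF i] n by simp
    next
      case False
      then have "0 < y i * s" using y i \<open>0 < s\<close> by (simp add: division_def order_less_le)
      then show ?thesis using proportional[OF i] by (auto simp: s_def max_def split: if_splits)
    qed
    then have "(\<Sum>i<n. g i) < (\<Sum>i<n. 1 / real n)"
      using n by (intro sum_strict_mono) (auto simp: lessThan_empty_iff)
    then show False using g_sum n by simp
  qed
  have "(\<Sum>i<n. g i - 1 / real n) = 0" using g_sum n by (simp add: sum_subtractf)
  then show ?thesis
    using sum_nonneg_eq_0_iff[of "{..<n}" "\<lambda>i. g i - 1 / real n"] not_below j by auto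
qed

text \<open>At a fixed point of the map that feeds each piece \<open>j\<close> with the deficit
  \<open>max 0 (1/n - G j y)\<close> and renormalises, the deficits are proportional to the pieces.\<close>

lemma division_balancing_point:
  fixes G :: "nat \<Rightarrow> (nat \<Rightarrow> real) \<Rightarrow> real"
  assumes n: "n \<ge> 1"
    and G_sum: "\<And>y. y \<in> division n \<Longrightarrow> (\<Sum>j<n. G j y) = 1"
    and G_zero: "\<And>j y. y \<in> division n \<Longrightarrow> j < n \<Longrightarrow> y j = 0 \<Longrightarrow> G j y = 0"
    and G_cont: "seq_continuous_on n (division n) (\<lambda>y j. G j y)"
  obtains y where "y \<in> division n" "\<And>j. j < n \<Longrightarrow> G j y = 1 / real n"
proof -
  define d where "d j y = max 0 (1 / real n - G j y)" for j y
  define T where "T y = (\<lambda>j. if j < n then (y j + d j y) / (1 + (\<Sum>i<n. d i y)) else 0)" for y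
  have d_sum: "0 \<le> (\<Sum>i<n. d i y)" for y by (simp add: d_def sum_nonneg)
  have "T y \<in> division n" if y: "y \<in> division n" for y
  proof -
    have "(\<Sum>j<n. T y j) = (\<Sum>j<n. y j + d j y) / (1 + (\<Sum>i<n. d i y))"
      by (simp add: T_def sum_divide_distrib)
    also have "\<dots> = 1" using y d_sum[of y] by (simp add: sum.distrib division_def)
    finally show ?thesis
      using y d_sum[of y] by (auto simp: division_def T_def d_def intro!: divide_nonneg_pos add_nonneg_nonneg)
  qed
  moreover have "seq_continuous_on n (division n) T"
    unfolding seq_continuous_on_def
  proof (intro allI impI)
    fix X y i assume X: "\<forall>m. X m \<in> division n" and y: "y \<in> division n"
      and lim: "\<forall>i. (\<lambda>m. X m i) \<longlonglongrightarrow> y i" and i: "i < n"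
    have "(\<lambda>m. d j (X m)) \<longlonglongrightarrow> d j y" if "j < n" for j
      unfolding d_def using seq_continuous_onD[OF G_cont _ y _ that, of X] X lim
      by (intro tendsto_intros) auto
    moreover have "1 + (\<Sum>i<n. d i y) \<noteq> 0" using d_sum[of y] by linarith
    ultimately show "(\<lambda>m. T (X m) i) \<longlonglongrightarrow> T y i"
      unfolding T_def using i lim by (auto intro!: tendsto_intros)
  qed
  ultimately obtain y where y: "y \<in> division n" and fix_y: "\<And>j. j < n \<Longrightarrow> T y j = y j"
    using brouwer_division[OF n] by blast
  have "y j * (\<Sum>i<n. d i y) = d j y" if "j < n" for j
  proof -
    have "y j * (1 + (\<Sum>i<n. d i y)) = y j + d j y"
      using fix_y[OF that] d_sum[of y] that by (simp add: T_def field_simps)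
    then show ?thesis by (simp add: algebra_simps)
  qed
  then have "G j y = 1 / real n" if "j < n" for j
    using equal_average_if_deficit_proportional[OF n y G_sum[OF y] G_zero[OF y] _ that]
    by (simp add: d_def)
  then show thesis using that y by blast
qed

section \<open>An approximate Hall condition\<close>

definition dist_l1 :: "nat \<Rightarrow> (nat \<Rightarrow> real) \<Rightarrow> (nat \<Rightarrow> real) \<Rightarrow> real" where
  "dist_l1 n x y = (\<Sum>i<n. \<bar>x i - y i\<bar>)"

text \<open>Capped at \<open>1\<close>, so that the distance to the empty set is meaningful.\<close>

definition infdist_l1 :: "nat \<Rightarrow> (nat \<Rightarrow> real) set \<Rightarrow> (nat \<Rightarrow> real) \<Rightarrow> real" where
  "infdist_l1 n A y = Inf (insert 1 (dist_l1 n y ` A))"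

lemma dist_l1_nonneg: "0 \<le> dist_l1 n x y"
  by (simp add: dist_l1_def sum_nonneg)

lemma dist_l1_commute: "dist_l1 n x y = dist_l1 n y x"
  by (simp add: dist_l1_def abs_minus_commute)

lemma dist_l1_triangle: "dist_l1 n x z \<le> dist_l1 n x y + dist_l1 n y z"
  unfolding dist_l1_def sum.distrib[symmetric] by (rule sum_mono) linarith

lemma abs_le_dist_l1: "i < n \<Longrightarrow> \<bar>x i - y i\<bar> \<le> dist_l1 n x y"
  unfolding dist_l1_def by (rule member_le_sum[where f = "\<lambda>i. \<bar>x i - y i\<bar>"]) auto

lemma bdd_below_dist_l1: "bdd_below (dist_l1 n y ` A)"
  by (rule bdd_belowI[where m = 0]) (auto simp: dist_l1_nonneg)

lemma infdist_l1_nonneg: "0 \<le> infdist_l1 n A y"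
  unfolding infdist_l1_def by (rule cInf_greatest) (auto simp: dist_l1_nonneg)

lemma infdist_l1_le_1: "infdist_l1 n A y \<le> 1"
  unfolding infdist_l1_def by (rule cInf_lower) (auto simp: bdd_below_dist_l1)

lemma infdist_l1_le_dist_l1: "z \<in> A \<Longrightarrow> infdist_l1 n A y \<le> dist_l1 n y z"
  unfolding infdist_l1_def by (rule cInf_lower) (auto simp: bdd_below_dist_l1)

lemma infdist_l1_lessE:
  assumes "infdist_l1 n A y < e" "e \<le> 1"
  obtains z where "z \<in> A" "dist_l1 n y z < e"
  using assms unfolding infdist_l1_def by (subst (asm) cInf_less_iff) (auto simp: bdd_below_dist_l1)

lemma infdist_l1_le_add: "infdist_l1 n A y \<le> infdist_l1 n A y' + dist_l1 n y y'"
proof -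
  have "infdist_l1 n A y - dist_l1 n y y' \<le> infdist_l1 n A y'"
    unfolding infdist_l1_def[of n A y']
  proof (rule cInf_greatest)
    fix t assume "t \<in> insert 1 (dist_l1 n y' ` A)"
    then consider "t = 1" | z where "z \<in> A" "t = dist_l1 n y' z" by blast
    then show "infdist_l1 n A y - dist_l1 n y y' \<le> t"
    proof cases
      case 1
      then show ?thesis using infdist_l1_le_1[of n A y] dist_l1_nonneg[of n y y'] by linarith
    next
      case 2
      then show ?thesis
        using infdist_l1_le_dist_l1[of z A n y] dist_l1_triangle[of n y z y'] by linarith
    qed
  qed simp
  then show ?thesis by simp
qed

lemma tendsto_infdist_l1:
  assumes "\<And>i. (\<lambda>m. Y m i) \<longlonglongrightarrow> y i"
  shows "(\<lambda>m. infdist_l1 n A (Y m)) \<longlonglongrightarrow> infdist_l1 n A y"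
proof -
  have "(\<lambda>m. dist_l1 n (Y m) y) \<longlonglongrightarrow> (\<Sum>i<n. \<bar>y i - y i\<bar>)"
    unfolding dist_l1_def by (intro tendsto_intros assms)
  moreover have "\<bar>infdist_l1 n A (Y m) - infdist_l1 n A y\<bar> \<le> dist_l1 n (Y m) y" for m
    using infdist_l1_le_add[of n A "Y m" y] infdist_l1_le_add[of n A y "Y m"] dist_l1_commute[of n y "Y m"]
    by linarith
  ultimately show ?thesis using LIMSEQ_close_to[OF tendsto_const] by simp
qed

lemma fractional_hall_bound:
  fixes F :: "'p \<Rightarrow> nat \<Rightarrow> real" and E :: "'p \<Rightarrow> nat set"
  assumes I: "finite I" and S: "S \<subseteq> I"
    and F_nonneg: "\<And>p j. p \<in> I \<Longrightarrow> j < n \<Longrightarrow> 0 \<le> F p j"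
    and F_row: "\<And>p. p \<in> I \<Longrightarrow> (\<Sum>j<n. F p j) = 1"
    and F_col: "\<And>j. j < n \<Longrightarrow> (\<Sum>p\<in>I. F p j) = c"
    and F_supp: "\<And>p j. p \<in> I \<Longrightarrow> j < n \<Longrightarrow> 0 < F p j \<Longrightarrow> j \<in> E p"
  shows "real (card S) \<le> c * real (card (\<Union>p\<in>S. E p \<inter> {..<n}))"
proof -
  define N where "N = (\<Union>p\<in>S. E p \<inter> {..<n})"
  have N: "N \<subseteq> {..<n}" by (auto simp: N_def)
  have "real (card S) = (\<Sum>p\<in>S. \<Sum>j<n. F p j)"
    using S F_row by (simp add: subset_iff)
  also have "\<dots> = (\<Sum>p\<in>S. \<Sum>j\<in>N. F p j)"
  proof (rule sum.cong[OF refl], rule sum.mono_neutral_right)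
    fix p assume p: "p \<in> S"
    show "\<forall>j\<in>{..<n} - N. F p j = 0"
      using F_nonneg F_supp p S by (force simp: N_def order_less_le)
  qed (use N in auto)
  also have "\<dots> \<le> (\<Sum>p\<in>I. \<Sum>j\<in>N. F p j)"
    using S N I F_nonneg by (intro sum_mono2) (auto intro!: sum_nonneg)
  also have "\<dots> = (\<Sum>j\<in>N. \<Sum>p\<in>I. F p j)" by (rule sum.swap)
  also have "\<dots> = c * real (card N)" using N F_col by (simp add: subset_iff)
  finally show ?thesis by (simp add: N_def)
qed

definition near_pieces ::
  "(nat \<Rightarrow> nat \<Rightarrow> (nat \<Rightarrow> real) \<Rightarrow> nat set) \<Rightarrow> nat \<Rightarrow> nat \<Rightarrow> real \<Rightarrow> (nat \<Rightarrow> real) \<Rightarrow> nat set"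
where
  "near_pieces pref p n e y = {j. j < n \<and> infdist_l1 n {z \<in> division n. j \<in> pref p n z} y < e}"

definition preference_weight ::
  "(nat \<Rightarrow> nat \<Rightarrow> (nat \<Rightarrow> real) \<Rightarrow> nat set) \<Rightarrow> nat \<Rightarrow> nat \<Rightarrow> real \<Rightarrow> (nat \<Rightarrow> real) \<Rightarrow> nat \<Rightarrow> real"
where
  "preference_weight pref p n e y j = y j * max 0 (e - infdist_l1 n {z \<in> division n. j \<in> pref p n z} y)"

lemma preference_weight_nonneg:
  "y \<in> division n \<Longrightarrow> j < n \<Longrightarrow> 0 \<le> preference_weight pref p n e y j"
  by (simp add: preference_weight_def division_def)

lemma preference_weight_pos_imp_near:
  "0 < preference_weight pref p n e y j \<Longrightarrow> j < n \<Longrightarrow> j \<in> near_pieces pref p n e y"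
  by (auto simp: preference_weight_def near_pieces_def zero_less_mult_iff)

lemma sum_preference_weight_pos:
  assumes "preferences_wf k pref" "hungry k pref" "p < k" "y \<in> division n" "0 < e"
  shows "0 < (\<Sum>j<n. preference_weight pref p n e y j)"
proof -
  obtain j where j: "j \<in> pref p n y" "0 < y j"
    using assms unfolding hungry_def by blast
  then have "j < n" using assms unfolding preferences_wf_def by blast
  have "infdist_l1 n {z \<in> division n. j \<in> pref p n z} y \<le> 0"
    using infdist_l1_le_dist_l1[of y _ n y] j assms(4) by (simp add: dist_l1_def)
  then have "0 < preference_weight pref p n e y j"
    using j assms(5) infdist_l1_nonneg by (simp add: preference_weight_def)
  also have "\<dots> \<le> (\<Sum>j<n. preference_weight pref p n e y j)"
    using \<open>j < n\<close> assms(4) by (intro member_le_sum preference_weight_nonneg) auto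
  finally show ?thesis .
qed

lemma tendsto_preference_weight:
  "(\<And>i. (\<lambda>m. Y m i) \<longlonglongrightarrow> y i) \<Longrightarrow>
    (\<lambda>m. preference_weight pref p n e (Y m) j) \<longlonglongrightarrow> preference_weight pref p n e y j"
  unfolding preference_weight_def by (intro tendsto_intros tendsto_infdist_l1)

definition preference_share ::
  "(nat \<Rightarrow> nat \<Rightarrow> (nat \<Rightarrow> real) \<Rightarrow> nat set) \<Rightarrow> nat \<Rightarrow> nat \<Rightarrow> real \<Rightarrow> (nat \<Rightarrow> real) \<Rightarrow> nat \<Rightarrow> real"
where
  "preference_share pref p n e y j =
     preference_weight pref p n e y j / (\<Sum>i<n. preference_weight pref p n e y i)"

context
  fixes k n :: nat and pref :: "nat \<Rightarrow> nat \<Rightarrow> (nat \<Rightarrow> real) \<Rightarrow> nat set" and e :: real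
  assumes wf: "preferences_wf k pref" and hu: "hungry k pref" and e: "0 < e"
begin

lemma preference_share_nonneg:
  "p < k \<Longrightarrow> y \<in> division n \<Longrightarrow> j < n \<Longrightarrow> 0 \<le> preference_share pref p n e y j"
  unfolding preference_share_def
  using preference_weight_nonneg sum_preference_weight_pos[OF wf hu _ _ e] by (simp add: less_imp_le)

lemma sum_preference_share:
  "p < k \<Longrightarrow> y \<in> division n \<Longrightarrow> (\<Sum>j<n. preference_share pref p n e y j) = 1"
  using sum_preference_weight_pos[OF wf hu _ _ e, of p y n]
  by (simp add: preference_share_def sum_divide_distrib[symmetric])

lemma preference_share_pos_imp_near:
  assumes "p < k" "y \<in> division n" "j < n" "0 < preference_share pref p n e y j"
  shows "j \<in> near_pieces pref p n e y"
  using assms sum_preference_weight_pos[OF wf hu _ _ e, of p y n] preference_weight_pos_imp_near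
  by (simp add: preference_share_def zero_less_divide_iff)

lemma tendsto_preference_share:
  assumes "p < k" "y \<in> division n" "\<And>i. (\<lambda>m. Y m i) \<longlonglongrightarrow> y i"
  shows "(\<lambda>m. preference_share pref p n e (Y m) j) \<longlonglongrightarrow> preference_share pref p n e y j"
  unfolding preference_share_def
  using sum_preference_weight_pos[OF wf hu assms(1,2) e] assms(3)
  by (intro tendsto_intros tendsto_preference_weight) auto

end

lemma balanced_preference_shares:
  assumes n: "n \<ge> 1" and wf: "preferences_wf (Suc n) pref" and hu: "hungry (Suc n) pref"
    and e: "0 < e"
  obtains y where "y \<in> division n"
    "\<And>j. j < n \<Longrightarrow> (\<Sum>p<Suc n. preference_share pref p n e y j) = real (Suc n) / real n"
proof -
  define G where "G j y = (\<Sum>p<Suc n. preference_share pref p n e y j) / real (Suc n)" for j y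
  have "seq_continuous_on n (division n) (\<lambda>y j. G j y)"
    unfolding seq_continuous_on_def G_def
    using tendsto_preference_share[OF wf hu e] by (auto intro!: tendsto_intros)
  moreover have "(\<Sum>j<n. G j y) = 1" if "y \<in> division n" for y
  proof -
    have "(\<Sum>j<n. G j y) = (\<Sum>j<n. \<Sum>p<Suc n. preference_share pref p n e y j) / real (Suc n)"
      unfolding G_def by (simp only: sum_divide_distrib)
    also have "\<dots> = (\<Sum>p<Suc n. \<Sum>j<n. preference_share pref p n e y j) / real (Suc n)"
      by (subst sum.swap) (rule refl)
    finally show ?thesis using sum_preference_share[OF wf hu e _ that] by simp
  qed
  moreover have "G j y = 0" if "y j = 0" for j y
    using that by (simp add: G_def preference_share_def preference_weight_def)
  ultimately obtain y where y: "y \<in> division n" and G: "\<And>j. j < n \<Longrightarrow> G j y = 1 / real n"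
    using division_balancing_point[OF n] by blast
  have "(\<Sum>p<Suc n. preference_share pref p n e y j) = real (Suc n) * G j y" for j
    unfolding G_def by (simp del: sum.lessThan_Suc)
  then show thesis using that y G by simp
qed

lemma le_of_mult_le_Suc_mult:
  fixes n s t :: nat
  assumes "n * s \<le> Suc n * t" "s \<le> n"
  shows "s \<le> t"
proof (rule ccontr)
  assume "\<not> s \<le> t"
  then have "Suc n * Suc t \<le> Suc n * s" by (intro mult_le_mono2) simp
  then show False using assms by (simp add: algebra_simps)
qed

text \<open>Double counting: the players of \<open>S\<close> hold \<open>card S\<close> units of share, all placed on pieces
  they almost prefer, and each piece carries only \<open>(n + 1) / n\<close> units in total.\<close>

lemma approximate_hall_division:
  assumes n: "n \<ge> 1" and wf: "preferences_wf (Suc n) pref" and hu: "hungry (Suc n) pref"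
    and e: "0 < e"
  obtains y where "y \<in> division n"
    "\<And>S. S \<subseteq> {..<Suc n} \<Longrightarrow> card S \<le> n \<Longrightarrow> card S \<le> card (\<Union>p\<in>S. near_pieces pref p n e y)"
proof -
  obtain y where y: "y \<in> division n"
    and balanced: "\<And>j. j < n \<Longrightarrow> (\<Sum>p<Suc n. preference_share pref p n e y j) = real (Suc n) / real n"
    using balanced_preference_shares[OF n wf hu e] by blast
  have "card S \<le> card (\<Union>p\<in>S. near_pieces pref p n e y)"
    if S: "S \<subseteq> {..<Suc n}" "card S \<le> n" for S
  proof -
    let ?N = "\<Union>p\<in>S. near_pieces pref p n e y \<inter> {..<n}"
    have "real (card S) \<le> real (Suc n) / real n * real (card ?N)"
      using preference_share_nonneg[OF wf hu e] sum_preference_share[OF wf hu e]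
        preference_share_pos_imp_near[OF wf hu e] y balanced
      by (intro fractional_hall_bound[where F = "\<lambda>p. preference_share pref p n e y", OF _ S(1)]) auto
    then have "real (n * card S) \<le> real (Suc n * card ?N)"
      using n by (simp add: pos_le_divide_eq algebra_simps)
    moreover have "?N = (\<Union>p\<in>S. near_pieces pref p n e y)"
      by (auto simp: near_pieces_def)
    ultimately show ?thesis using S(2) le_of_mult_le_Suc_mult of_nat_le_iff by metis
  qed
  then show thesis using that y by blast
qed

section \<open>Hall's marriage theorem\<close>

lemma hall_condition_Diff_critical:
  fixes E :: "'a \<Rightarrow> 'b set"
  assumes hall: "\<And>T. T \<subseteq> I \<Longrightarrow> card T \<le> card (\<Union>(E ` T))"
    and fin: "finite I" "\<And>i. i \<in> I \<Longrightarrow> finite (E i)"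
    and S: "S \<subseteq> I" "card (\<Union>(E ` S)) \<le> card S"
    and T: "T \<subseteq> I - S"
  shows "card T \<le> card (\<Union>i\<in>T. E i - \<Union>(E ` S))"
proof -
  have "S \<union> T \<subseteq> I" using S T by blast
  then have fin_ST: "finite (\<Union>(E ` (S \<union> T)))"
    using fin by (intro finite_UN_I) (auto intro: rev_finite_subset)
  have "card S + card T = card (S \<union> T)"
    using S T fin by (intro card_Un_disjoint[symmetric]) (auto intro: finite_subset)
  also have "\<dots> \<le> card (\<Union>(E ` (S \<union> T)))" using S T by (intro hall) auto
  also have "\<dots> = card (\<Union>(E ` S)) + card (\<Union>(E ` (S \<union> T)) - \<Union>(E ` S))"
  proof -
    have sub: "\<Union>(E ` S) \<subseteq> \<Union>(E ` (S \<union> T))" by blast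
    show ?thesis
      using card_Diff_subset[OF finite_subset[OF sub fin_ST] sub] card_mono[OF fin_ST sub] by simp
  qed
  also have "\<Union>(E ` (S \<union> T)) - \<Union>(E ` S) = (\<Union>i\<in>T. E i - \<Union>(E ` S))" by blast
  finally show ?thesis using S(2) by linarith
qed

lemma hall_condition_Diff_surplus:
  fixes E :: "'a \<Rightarrow> 'b set"
  assumes surplus: "\<And>T. T \<subseteq> I \<Longrightarrow> T \<noteq> {} \<Longrightarrow> T \<noteq> I \<Longrightarrow> card T < card (\<Union>(E ` T))"
    and i: "i \<in> I" and T: "T \<subseteq> I - {i}"
  shows "card T \<le> card (\<Union>j\<in>T. E j - {e})"
proof (cases "T = {}")
  case False
  have "card T < card (\<Union>(E ` T))" using T i False by (intro surplus) auto
  then have "card T \<le> card (\<Union>(E ` T)) - 1" by linarith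
  also have "\<dots> \<le> card (\<Union>(E ` T) - {e})"
    using diff_card_le_card_Diff[of "{e}" "\<Union>(E ` T)"] by simp
  also have "\<Union>(E ` T) - {e} = (\<Union>j\<in>T. E j - {e})" by blast
  finally show ?thesis .
qed simp

lemma inj_on_if_disjoint_images:
  assumes "S \<inter> T = {}" "inj_on f S" "inj_on g T" "f ` S \<subseteq> N" "g ` T \<inter> N = {}"
  shows "inj_on (\<lambda>i. if i \<in> S then f i else g i) (S \<union> T)"
proof -
  let ?h = "\<lambda>i. if i \<in> S then f i else g i"
  have "inj_on ?h S" using assms(2) by (simp add: inj_on_def)
  moreover have "inj_on ?h T" using assms(1,3) by (auto simp: inj_on_def)
  moreover have "?h ` S \<inter> ?h ` T = {}" using assms(1,4,5) by auto
  ultimately show ?thesis by (auto simp: inj_on_Un)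
qed

theorem Hall_marriage:
  fixes E :: "'a \<Rightarrow> 'b set"
  assumes "finite I" "\<And>i. i \<in> I \<Longrightarrow> finite (E i)" "\<And>S. S \<subseteq> I \<Longrightarrow> card S \<le> card (\<Union>(E ` S))"
  obtains \<sigma> where "inj_on \<sigma> I" "\<And>i. i \<in> I \<Longrightarrow> \<sigma> i \<in> E i"
proof -
  have "\<exists>\<sigma>. inj_on \<sigma> I \<and> (\<forall>i\<in>I. \<sigma> i \<in> E i)"
    using assms
  proof (induction "card I" arbitrary: I E rule: less_induct)
    case less
    note fin = less.prems(1,2) and hall = less.prems(3)
    show ?case
    proof (cases "\<exists>S. S \<subseteq> I \<and> S \<noteq> {} \<and> S \<noteq> I \<and> card (\<Union>(E ` S)) \<le> card S")
      case True
      then obtain S where S: "S \<subseteq> I" "S \<noteq> {}" "S \<noteq> I" "card (\<Union>(E ` S)) \<le> card S" by blast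
      define N where "N = \<Union>(E ` S)"
      have "S \<subset> I" "I - S \<subset> I" using S by auto
      then have card_lt: "card S < card I" "card (I - S) < card I"
        using fin(1) by (auto intro: psubset_card_mono)
      have "finite S" "finite (I - S)" using S(1) fin(1) by (auto intro: finite_subset)
      have "\<exists>\<sigma>. inj_on \<sigma> S \<and> (\<forall>i\<in>S. \<sigma> i \<in> E i)"
        using S(1) fin(2) hall by (intro less.hyps[OF card_lt(1) \<open>finite S\<close>]) auto
      then obtain \<sigma>\<^sub>1 where \<sigma>\<^sub>1: "inj_on \<sigma>\<^sub>1 S" "\<forall>i\<in>S. \<sigma>\<^sub>1 i \<in> E i" by blast
      have "\<exists>\<sigma>. inj_on \<sigma> (I - S) \<and> (\<forall>i\<in>I - S. \<sigma> i \<in> E i - N)"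
        using fin(2) hall_condition_Diff_critical[OF hall fin S(1,4)] unfolding N_def
        by (intro less.hyps[OF card_lt(2) \<open>finite (I - S)\<close>]) auto
      then obtain \<sigma>\<^sub>2 where \<sigma>\<^sub>2: "inj_on \<sigma>\<^sub>2 (I - S)" "\<forall>i\<in>I - S. \<sigma>\<^sub>2 i \<in> E i - N" by blast
      have "\<sigma>\<^sub>1 ` S \<subseteq> N" "\<sigma>\<^sub>2 ` (I - S) \<inter> N = {}" using \<sigma>\<^sub>1(2) \<sigma>\<^sub>2(2) by (auto simp: N_def)
      then have "inj_on (\<lambda>i. if i \<in> S then \<sigma>\<^sub>1 i else \<sigma>\<^sub>2 i) (S \<union> (I - S))"
        using \<sigma>\<^sub>1(1) \<sigma>\<^sub>2(1) by (intro inj_on_if_disjoint_images) auto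
      moreover have "S \<union> (I - S) = I" using S(1) by blast
      ultimately show ?thesis using \<sigma>\<^sub>1(2) \<sigma>\<^sub>2(2) by (intro exI[of _ "\<lambda>i. if i \<in> S then \<sigma>\<^sub>1 i else \<sigma>\<^sub>2 i"]) auto
    next
      case False
      then have surplus: "card T < card (\<Union>(E ` T))" if "T \<subseteq> I" "T \<noteq> {}" "T \<noteq> I" for T
        using that by (meson not_le)
      show ?thesis
      proof (cases "I = {}")
        case False
        then obtain i where i: "i \<in> I" by blast
        have "1 \<le> card (E i)" using hall[of "{i}"] i by simp
        then obtain e where e: "e \<in> E i" by (metis card.empty ex_in_conv not_one_le_zero)
        have "finite (I - {i})" "card (I - {i}) < card I" using card_Diff1_less[OF fin(1) i] fin(1) by auto
        then have "\<exists>\<sigma>. inj_on \<sigma> (I - {i}) \<and> (\<forall>j\<in>I - {i}. \<sigma> j \<in> E j - {e})"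
          using fin(2) hall_condition_Diff_surplus[OF surplus i] by (intro less.hyps) auto
        then obtain \<sigma> where \<sigma>: "inj_on \<sigma> (I - {i})" "\<forall>j\<in>I - {i}. \<sigma> j \<in> E j - {e}" by blast
        have "inj_on (\<sigma>(i := e)) (insert i (I - {i}))"
          using \<sigma> by (auto simp: inj_on_def)
        moreover have "insert i (I - {i}) = I" using i by blast
        ultimately show ?thesis using \<sigma>(2) e by (metis DiffD1 fun_upd_apply insert_Diff_single insert_iff)
      qed simp
    qed
  qed
  then show thesis using that by blast
qed

section \<open>Passing to the limit\<close>

lemma finite_range_constant_subseq:
  fixes f :: "nat \<Rightarrow> 'a"
  assumes "finite (range f)"
  obtains r :: "nat \<Rightarrow> nat" and c where "strict_mono r" "\<And>m. f (r m) = c"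
proof -
  obtain c where "infinite (f -` {c})" using inf_img_fin_domE[OF assms] by blast
  then obtain r :: "nat \<Rightarrow> nat" where "strict_mono r" "\<And>m. r m \<in> f -` {c}"
    using infinite_enumerate by blast
  then show thesis using that by simp
qed

lemma division_convergent_subseq:
  fixes Y :: "nat \<Rightarrow> nat \<Rightarrow> real"
  assumes "\<And>m. Y m \<in> division n"
  obtains r y where "strict_mono r" "y \<in> division n" "\<And>i. (\<lambda>m. Y (r m) i) \<longlonglongrightarrow> y i"
proof -
  have "Y m i \<in> {0..1}" if "i < n" for m i
    using assms division_subset_unit_cube that by (fastforce simp: unit_cube_def)
  then obtain r L where r: "strict_mono r"
    and L: "\<And>i. i < n \<Longrightarrow> L i \<in> {0..1}" "\<And>i. i < n \<Longrightarrow> (\<lambda>m. Y (r m) i) \<longlonglongrightarrow> L i"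
    using coordinatewise_convergent_subseq[where K = "{0..1}" and X = Y] by blast
  define y where "y i = (if i < n then L i else 0)" for i
  have lim: "(\<lambda>m. Y (r m) i) \<longlonglongrightarrow> y i" for i
    using L(2) assms by (cases "i < n") (auto simp: y_def division_def)
  have "(\<lambda>m. \<Sum>i<n. Y (r m) i) \<longlonglongrightarrow> (\<Sum>i<n. y i)" by (intro tendsto_intros lim)
  moreover have "(\<Sum>i<n. Y (r m) i) = 1" for m using assms by (simp add: division_def)
  ultimately have "(\<Sum>i<n. y i) = 1" using LIMSEQ_unique[OF _ tendsto_const] by force
  then have "y \<in> division n" using L(1) by (auto simp: division_def y_def)
  then show thesis using that r lim by blast
qed

lemma near_pieces_limit_preferred:
  assumes cl: "closed_preferences k pref" and p: "p < k"
    and Y: "\<And>m. Y m \<in> division n" and y: "y \<in> division n" and lim: "\<And>i. (\<lambda>m. Y m i) \<longlonglongrightarrow> y i"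
    and e: "e \<longlonglongrightarrow> 0" "\<And>m. e m \<le> 1" and near: "\<And>m. j \<in> near_pieces pref p n (e m) (Y m)"
  shows "j \<in> pref p n y"
proof -
  have "\<exists>z. z \<in> division n \<and> j \<in> pref p n z \<and> dist_l1 n (Y m) z < e m" for m
    using near[of m] e(2)[of m] by (auto simp: near_pieces_def elim!: infdist_l1_lessE)
  then obtain Z where Z: "\<And>m. Z m \<in> division n" "\<And>m. j \<in> pref p n (Z m)"
    and close: "\<And>m. dist_l1 n (Y m) (Z m) < e m" by metis
  have "(\<lambda>m. Z m i) \<longlonglongrightarrow> y i" for i
  proof (cases "i < n")
    case True
    have "\<bar>Z m i - Y m i\<bar> \<le> e m" for m
      using abs_le_dist_l1[OF True, of "Y m" "Z m"] close[of m] by linarith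
    then show ?thesis using LIMSEQ_close_to[OF lim e(1), of "\<lambda>m. Z m i"] by blast
  next
    case False
    then show ?thesis using Z(1) y by (simp add: division_def)
  qed
  then show ?thesis using cl p Z y unfolding closed_preferences_def by blast
qed

text \<open>Along a subsequence the family of almost preferred pieces, which takes only finitely many
  values, is constant and the divisions converge; closedness makes those pieces preferred at
  the limit.\<close>

lemma near_pieces_preferred_at_limit:
  fixes Y :: "nat \<Rightarrow> nat \<Rightarrow> real"
  assumes cl: "closed_preferences (Suc n) pref" and Y: "\<And>m. Y m \<in> division n"
  obtains m y where "y \<in> division n"
    "\<And>p. p < Suc n \<Longrightarrow> near_pieces pref p n (1 / real (Suc m)) (Y m) \<subseteq> pref p n y"
proof -
  define e where "e m = 1 / real (Suc m)" for m
  define near where "near m = restrict (\<lambda>p. near_pieces pref p n (e m) (Y m)) {..<Suc n}" for m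
  have "range near \<subseteq> PiE {..<Suc n} (\<lambda>_. Pow {..<n})"
    by (auto simp: near_def near_pieces_def PiE_def extensional_def)
  then have "finite (range near)" by (rule finite_subset) (simp add: finite_PiE)
  then have "\<exists>r c. strict_mono r \<and> (\<forall>m::nat. near (r m) = c)"
    by (rule finite_range_constant_subseq) blast
  then obtain r\<^sub>1 c where r\<^sub>1: "strict_mono r\<^sub>1" and c: "\<And>m::nat. near (r\<^sub>1 m) = c"
    by blast
  obtain r\<^sub>2 y where r\<^sub>2: "strict_mono r\<^sub>2" and y: "y \<in> division n"
    and lim: "\<And>i. (\<lambda>m. Y (r\<^sub>1 (r\<^sub>2 m)) i) \<longlonglongrightarrow> y i"
    using division_convergent_subseq[of "\<lambda>m. Y (r\<^sub>1 m)"] Y by blast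
  define R where "R = r\<^sub>1 \<circ> r\<^sub>2"
  have lim_R: "(\<lambda>m. Y (R m) i) \<longlonglongrightarrow> y i" for i
    using lim by (simp add: R_def)
  have e_R: "(\<lambda>m. e (R m)) \<longlonglongrightarrow> 0"
    using LIMSEQ_subseq_LIMSEQ[OF LIMSEQ_inverse_real_of_nat strict_mono_o[OF r\<^sub>1 r\<^sub>2]]
    by (simp add: R_def e_def comp_def inverse_eq_divide)
  have c_R: "c p = near_pieces pref p n (e (R m)) (Y (R m))" if "p < Suc n" for p m
    using c[of "r\<^sub>2 m", symmetric] that by (simp add: R_def near_def)
  have "c p \<subseteq> pref p n y" if p: "p < Suc n" for p
  proof
    fix j assume "j \<in> c p"
    then have "j \<in> near_pieces pref p n (e (R m)) (Y (R m))" for m using c_R[OF p] by blast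
    then show "j \<in> pref p n y"
      using near_pieces_limit_preferred[OF cl p Y y lim_R e_R] by (simp add: e_def)
  qed
  then show thesis using that[of y "R 0"] y c_R by (simp add: e_def)
qed

lemma exists_division_hall_condition:
  assumes n: "n \<ge> 1" and wf: "preferences_wf (Suc n) pref" and hu: "hungry (Suc n) pref"
    and cl: "closed_preferences (Suc n) pref"
  obtains y where "y \<in> division n"
    "\<And>S. S \<subseteq> {..<Suc n} \<Longrightarrow> card S \<le> n \<Longrightarrow> card S \<le> card (\<Union>p\<in>S. pref p n y)"
proof -
  have "\<exists>y\<in>division n. \<forall>S\<subseteq>{..<Suc n}. card S \<le> n \<longrightarrow>
          card S \<le> card (\<Union>p\<in>S. near_pieces pref p n (1 / real (Suc m)) y)" for m
    by (rule approximate_hall_division[OF n wf hu, of "1 / real (Suc m)"]) auto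
  then obtain Y :: "nat \<Rightarrow> nat \<Rightarrow> real" where Y: "\<And>m. Y m \<in> division n"
    and hall_Y: "\<And>m S. S \<subseteq> {..<Suc n} \<Longrightarrow> card S \<le> n \<Longrightarrow>
      card S \<le> card (\<Union>p\<in>S. near_pieces pref p n (1 / real (Suc m)) (Y m))"
    by metis
  have "\<exists>m y. y \<in> division n \<and>
          (\<forall>p<Suc n. near_pieces pref p n (1 / real (Suc m)) (Y m) \<subseteq> pref p n y)"
    by (rule near_pieces_preferred_at_limit[OF cl Y]) blast
  then obtain m y where y: "y \<in> division n"
    and near: "\<And>p. p < Suc n \<Longrightarrow> near_pieces pref p n (1 / real (Suc m)) (Y m) \<subseteq> pref p n y"
    by blast
  have "card S \<le> card (\<Union>p\<in>S. pref p n y)" if S: "S \<subseteq> {..<Suc n}" "card S \<le> n" for S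
  proof -
    have "(\<Union>p\<in>S. pref p n y) \<subseteq> {..<n}"
      using wf y S(1) unfolding preferences_wf_def by blast
    then have "finite (\<Union>p\<in>S. pref p n y)" by (rule finite_subset) simp
    moreover have "(\<Union>p\<in>S. near_pieces pref p n (1 / real (Suc m)) (Y m)) \<subseteq> (\<Union>p\<in>S. pref p n y)"
      using near S(1) by blast
    ultimately have "card (\<Union>p\<in>S. near_pieces pref p n (1 / real (Suc m)) (Y m)) \<le> card (\<Union>p\<in>S. pref p n y)"
      by (rule card_mono)
    then show ?thesis using hall_Y[OF S, of m] by linarith
  qed
  then show thesis using that y by blast
qed

lemma Hall_marriage_bij_betw:
  fixes E :: "'a \<Rightarrow> 'b set"
  assumes I: "finite I" and J: "finite J" "card I = card J" and E: "\<And>i. i \<in> I \<Longrightarrow> E i \<subseteq> J"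
    and hall: "\<And>S. S \<subseteq> I \<Longrightarrow> card S \<le> card (\<Union>(E ` S))"
  obtains \<sigma> where "bij_betw \<sigma> I J" "\<And>i. i \<in> I \<Longrightarrow> \<sigma> i \<in> E i"
proof -
  have "finite (E i)" if "i \<in> I" for i using E[OF that] J(1) by (rule finite_subset)
  then obtain \<sigma> where inj: "inj_on \<sigma> I" and \<sigma>: "\<And>i. i \<in> I \<Longrightarrow> \<sigma> i \<in> E i"
    using Hall_marriage[OF I _ hall] by blast
  have "\<sigma> ` I \<subseteq> J" using \<sigma> E by blast
  moreover have "card (\<sigma> ` I) = card J" using card_image[OF inj] J(2) by simp
  ultimately have "\<sigma> ` I = J" using card_subset_eq[OF J(1)] by blast
  then show thesis using that inj \<sigma> by (simp add: bij_betw_def)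
qed

theorem corollary1p1:
  fixes k :: nat and pref :: "nat \<Rightarrow> nat \<Rightarrow> (nat \<Rightarrow> real) \<Rightarrow> nat set"
  assumes "k \<ge> 2"
    and "preferences_wf k pref"
    and "hungry k pref"
    and "closed_preferences k pref"
  shows "\<exists>y\<in>division (k - 1). \<forall>l<k. \<exists>\<sigma>.
           bij_betw \<sigma> ({..<k} - {l}) {..<k - 1} \<and>
           (\<forall>i\<in>{..<k} - {l}. \<sigma> i \<in> pref i (k - 1) y)"
proof -
  define n where "n = k - 1"
  have k: "k = Suc n" and n: "n \<ge> 1" using assms(1) by (auto simp: n_def)
  obtain y where y: "y \<in> division n"
    and hall: "\<And>S. S \<subseteq> {..<k} \<Longrightarrow> card S \<le> n \<Longrightarrow> card S \<le> card (\<Union>p\<in>S. pref p n y)"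
    using exists_division_hall_condition[OF n] assms(2-4) unfolding k by blast
  have "\<exists>\<sigma>. bij_betw \<sigma> ({..<k} - {l}) {..<n} \<and> (\<forall>i\<in>{..<k} - {l}. \<sigma> i \<in> pref i n y)"
    if l: "l < k" for l
  proof (rule Hall_marriage_bij_betw)
    show "card ({..<k} - {l}) = card {..<n}" using l k by simp
    show "pref i n y \<subseteq> {..<n}" if "i \<in> {..<k} - {l}" for i
      using assms(2) y that unfolding preferences_wf_def by blast
    show "card S \<le> card (\<Union>i\<in>S. pref i n y)" if S: "S \<subseteq> {..<k} - {l}" for S
    proof (rule hall)
      show "card S \<le> n" using card_mono[OF _ S] l k by simp
    qed (use S in blast)
  qed auto
  then show ?thesis using y unfolding n_def by blast
qed

end
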